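(* Let $\lambda,a\in\mathbb{R}^n$ with $\|\lambda\|=\|a\|=1$ and $d\in\mathbb{R}^m$ with $\|d\|\le1$. For $y\in\mathbb{R}^m$ let $\phi_\lambda(y)=\max_x\{\lambda^\mathsf{T} x:\|x\|\le\|y\|,\ a^\mathsf{T} x+d^\mathsf{T} y\le0\}$. Then $$\phi_\lambda(y)=\begin{cases}\|y\|, & \text{if } \lambda^\mathsf{T} a\,\|y\|+d^\mathsf{T} y\le0,\\ \sqrt{(\|y\|^2-(d^\mathsf{T} y)^2)(1-(\lambda^\mathsf{T} a)^2)}-d^\mathsf{T} y\,\lambda^\mathsf{T} a, & \text{otherwise.}\end{cases}$$ Furthermore, $\phi_\lambda$ is sublinear (convex and positively homogeneous), and: if $\|d\|=1$ and $m>1$, then $\phi_\lambda$ is differentiable on $\mathbb{R}^m\setminus d\mathbb{R}_+$; otherwise $\phi_\lambda$ is differentiable on $\mathbb{R}^m\setminus\{0\}$.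
   Context: $\|\cdot\|$ is the Euclidean norm; $d\mathbb{R}_+=\{td:t\ge0\}$. *)

theory Defs
  imports "HOL-Analysis.Analysis"
begin

text \<open>The value function phi_lambda(y) = max { lam . x : norm x <= norm y, a . x + d . y <= 0 }.
  The maximum is taken as the supremum of the (compact, nonempty) feasible value set.\<close>
definition phi :: "real ^ 'n \<Rightarrow> real ^ 'n \<Rightarrow> real ^ 'm \<Rightarrow> real ^ 'm \<Rightarrow> real" where
  "phi lam a d y = Sup ((\<lambda>x. lam \<bullet> x) ` {x. norm x \<le> norm y \<and> a \<bullet> x + d \<bullet> y \<le> 0})"

end

theory Submission
  imports Defs
begin

text \<open>Write \<open>s = \<lambda>\<^sup>T a\<close> and split \<open>x = \<alpha> a + z\<close> with \<open>z \<bottom> a\<close>. Cauchy-Schwarz on the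
  components orthogonal to \<open>a\<close> bounds the objective by \<open>s \<alpha> + \<surd>(1 - s\<^sup>2) \<surd>(\<parallel>y\<parallel>\<^sup>2 - \<alpha>\<^sup>2)\<close>,
  with equality for a suitable \<open>z\<close>. This function of \<open>\<alpha>\<close> increases up to its maximum \<open>\<parallel>y\<parallel>\<close>
  at \<open>\<alpha> = s \<parallel>y\<parallel>\<close>, so under the constraint \<open>\<alpha> \<le> -d\<^sup>T y\<close> the optimum is \<open>\<parallel>y\<parallel>\<close> or the
  value at \<open>\<alpha> = -d\<^sup>T y\<close>, which is the closed form.

  The closed form is symmetric under exchanging \<open>s\<close> and \<open>d\<^sup>T y / \<parallel>y\<parallel>\<close>, so \<open>\<phi>\<^sub>\<lambda>(y)\<close> is itself
  the optimal value of a problem of the same kind in which \<open>y\<close> enters only the objective; a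
  maximizer is a linear minorant of \<open>\<phi>\<^sub>\<lambda>\<close> exact at \<open>y\<close>, which gives convexity.

  Away from the origin, \<open>\<phi>\<^sub>\<lambda>\<close> is locally \<open>\<parallel>y\<parallel>\<close> or the branch \<open>\<surd>(\<dots>) - s d\<^sup>T y\<close>, and on the
  switching surface it is squeezed between the branch and \<open>\<parallel>y\<parallel>\<close>, which touch there. The branch
  is smooth unless the radicand \<open>(\<parallel>y\<parallel>\<^sup>2 - (d\<^sup>T y)\<^sup>2)(1 - s\<^sup>2)\<close> vanishes at \<open>y\<close>; where the branch is
  active this happens only on the ray \<open>d \<real>\<^sub>+\<close> with \<open>\<parallel>d\<parallel> = 1\<close>, or when the branch is linear
  (\<open>s\<^sup>2 = 1\<close>, or \<open>m = 1\<close> and \<open>\<parallel>d\<parallel> = 1\<close>).\<close>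

lemma inner_sq_le_1:
  fixes u v :: "'a::real_inner"
  assumes "norm u \<le> 1" and "norm v \<le> 1"
  shows "(u \<bullet> v)\<^sup>2 \<le> 1"
proof -
  have "\<bar>u \<bullet> v\<bar> \<le> norm u * norm v"
    by (rule Cauchy_Schwarz_ineq2)
  also have "\<dots> \<le> 1"
    using assms by (simp add: mult_le_one)
  finally show ?thesis
    by (simp add: abs_square_le_1)
qed

lemma abs_inner_le_norm:
  fixes d y :: "'a::real_inner"
  assumes "norm d \<le> 1"
  shows "\<bar>d \<bullet> y\<bar> \<le> norm y"
proof -
  have "\<bar>d \<bullet> y\<bar> \<le> norm d * norm y"
    by (rule Cauchy_Schwarz_ineq2)
  also have "\<dots> \<le> norm y"
    using assms by (simp add: mult_left_le_one_le)
  finally show ?thesis .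
qed

lemma inner_eq_norm_imp_eq_scaleR:
  fixes d y :: "'a::real_inner"
  assumes "norm d \<le> 1" and "d \<bullet> y = norm y"
  shows "y = norm y *\<^sub>R d"
proof -
  let ?t = "norm y"
  have "(y - ?t *\<^sub>R d) \<bullet> (y - ?t *\<^sub>R d) = y \<bullet> y - 2 * ?t * (d \<bullet> y) + ?t\<^sup>2 * (d \<bullet> d)"
    by (simp add: inner_diff_left inner_diff_right inner_commute algebra_simps power2_eq_square)
  also have "\<dots> = ?t\<^sup>2 * ((norm d)\<^sup>2 - 1)"
    using assms(2) by (simp add: dot_square_norm power2_eq_square algebra_simps)
  also have "\<dots> \<le> 0"
    using assms(1) by (simp add: mult_nonneg_nonpos abs_square_le_1)
  finally show ?thesis
    by (metis inner_eq_zero_iff inner_ge_zero order_antisym eq_iff_diff_eq_0)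
qed

lemma convex_on_if_supported:
  fixes f :: "'a::real_inner \<Rightarrow> real"
  assumes "\<And>x. \<exists>u. u \<bullet> x = f x \<and> (\<forall>y. u \<bullet> y \<le> f y)"
  shows "convex_on UNIV f"
  unfolding convex_on_def
proof (intro conjI ballI allI impI)
  fix x y :: 'a and t1 t2 :: real
  assume t: "t1 \<ge> 0" "t2 \<ge> 0" "t1 + t2 = 1"
  obtain u where u: "u \<bullet> (t1 *\<^sub>R x + t2 *\<^sub>R y) = f (t1 *\<^sub>R x + t2 *\<^sub>R y)" and "\<forall>z. u \<bullet> z \<le> f z"
    using assms by blast
  then have "t1 * (u \<bullet> x) + t2 * (u \<bullet> y) \<le> t1 * f x + t2 * f y"
    using t by (intro add_mono mult_left_mono) auto
  then show "f (t1 *\<^sub>R x + t2 *\<^sub>R y) \<le> t1 * f x + t2 * f y"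
    using u by (simp add: inner_add_right)
qed simp

lemma differentiable_squeeze:
  fixes f L U :: "'a::real_normed_vector \<Rightarrow> real"
  assumes between: "eventually (\<lambda>y. L y \<le> f y \<and> f y \<le> U y) (at x)"
    and Lx: "L x = f x" and Ux: "U x = f x"
    and "L differentiable at x" and "U differentiable at x"
  shows "f differentiable at x"
proof -
  obtain DL DU where dL: "(L has_derivative DL) (at x)" and dU: "(U has_derivative DU) (at x)"
    using assms(4,5) unfolding differentiable_def by blast
  \<comment> \<open>\<open>U - L \<ge> 0\<close> attains a local minimum at \<open>x\<close>, so both derivatives agree.\<close>
  have "((\<lambda>y. U y - L y) has_derivative (\<lambda>h. DU h - DL h)) (at x)"
    by (intro has_derivative_diff dU dL)
  moreover have "eventually (\<lambda>y. U x - L x \<le> U y - L y) (at x)"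
    using between by eventually_elim (simp add: Lx Ux)
  ultimately have "(\<lambda>h. DU h - DL h) = (\<lambda>h. 0)"
    by (rule has_derivative_local_min)
  then have "DU = DL"
    by (simp add: fun_eq_iff)
  have "((\<lambda>y. (L y - L x - DL (y - x)) /\<^sub>R norm (y - x)) \<longlongrightarrow> 0) (at x)"
    and "((\<lambda>y. (U y - U x - DL (y - x)) /\<^sub>R norm (y - x)) \<longlongrightarrow> 0) (at x)"
    using dL dU \<open>DU = DL\<close> by (simp_all add: has_derivative_at_within)
  then have "((\<lambda>y. (f y - f x - DL (y - x)) /\<^sub>R norm (y - x)) \<longlongrightarrow> 0) (at x)"
  proof (rule real_tendsto_sandwich[rotated 2])
    show "eventually (\<lambda>y. (L y - L x - DL (y - x)) /\<^sub>R norm (y - x)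
        \<le> (f y - f x - DL (y - x)) /\<^sub>R norm (y - x)) (at x)"
      using between by eventually_elim (auto simp: Lx intro!: mult_left_mono)
    show "eventually (\<lambda>y. (f y - f x - DL (y - x)) /\<^sub>R norm (y - x)
        \<le> (U y - U x - DL (y - x)) /\<^sub>R norm (y - x)) (at x)"
      using between by eventually_elim (auto simp: Ux intro!: mult_left_mono)
  qed
  then have "(f has_derivative DL) (at x)"
    using dL by (simp add: has_derivative_at_within)
  then show ?thesis
    unfolding differentiable_def by blast
qed

definition reduced_objective :: "real \<Rightarrow> real \<Rightarrow> real \<Rightarrow> real" where
  "reduced_objective s r \<alpha> = s * \<alpha> + sqrt (1 - s\<^sup>2) * sqrt (r\<^sup>2 - \<alpha>\<^sup>2)"

definition phi_formula :: "real \<Rightarrow> real \<Rightarrow> real \<Rightarrow> real" where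
  "phi_formula s r c = (if s * r + c \<le> 0 then r else sqrt ((r\<^sup>2 - c\<^sup>2) * (1 - s\<^sup>2)) - c * s)"

lemma reduced_objective_le:
  assumes "s\<^sup>2 \<le> 1" and "\<alpha>\<^sup>2 \<le> r\<^sup>2" and "r \<ge> 0"
  shows "reduced_objective s r \<alpha> \<le> r"
proof -
  let ?m = "sqrt (1 - s\<^sup>2)" and ?b = "sqrt (r\<^sup>2 - \<alpha>\<^sup>2)"
  have "(s * \<alpha> + ?m * ?b)\<^sup>2 = (s\<^sup>2 + ?m\<^sup>2) * (\<alpha>\<^sup>2 + ?b\<^sup>2) - (s * ?b - ?m * \<alpha>)\<^sup>2"
    by (simp add: power2_eq_square algebra_simps)
  also have "\<dots> \<le> (s\<^sup>2 + ?m\<^sup>2) * (\<alpha>\<^sup>2 + ?b\<^sup>2)"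
    by simp
  also have "\<dots> = r\<^sup>2"
    using assms by simp
  finally show ?thesis
    unfolding reduced_objective_def using assms(3) by (rule power2_le_imp_le)
qed

lemma phi_formula_eq:
  "phi_formula s r c = (if s * r + c \<le> 0 then r else reduced_objective s r (- c))"
  by (simp add: phi_formula_def reduced_objective_def real_sqrt_mult mult.commute)

lemma cross_nonneg_below_peak:
  assumes "s\<^sup>2 \<le> 1" and "q < s * r" and "q\<^sup>2 \<le> r\<^sup>2" and "r \<ge> 0"
  shows "sqrt (1 - s\<^sup>2) * q \<le> s * sqrt (r\<^sup>2 - q\<^sup>2)"
proof -
  let ?m = "sqrt (1 - s\<^sup>2)" and ?b = "sqrt (r\<^sup>2 - q\<^sup>2)"
  have squares: "(s * ?b)\<^sup>2 - (?m * q)\<^sup>2 = (s * r)\<^sup>2 - q\<^sup>2"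
    using assms by (simp add: power_mult_distrib algebra_simps)
  have m0: "?m \<ge> 0" and b0: "?b \<ge> 0"
    using assms by simp_all
  consider "s \<ge> 0" "q \<le> 0" | "q > 0" | "s < 0"
    by linarith
  then show ?thesis
  proof cases
    case 1
    then have "?m * q \<le> 0" and "s * ?b \<ge> 0"
      using m0 b0 by (simp_all add: mult_nonneg_nonpos)
    then show ?thesis
      by linarith
  next
    case 2
    then have "q\<^sup>2 \<le> (s * r)\<^sup>2"
      using assms(2) by (intro power_mono) auto
    then have "(?m * q)\<^sup>2 \<le> (s * ?b)\<^sup>2"
      using squares by linarith
    moreover have "s * r > 0"
      using 2 assms(2) by linarith
    then have "s * ?b \<ge> 0"
      using assms(4) b0 by (simp add: zero_less_mult_iff)
    ultimately show ?thesis
      by (rule power2_le_imp_le)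
  next
    case 3
    then have "s * r \<le> 0"
      using assms(4) by (simp add: mult_nonpos_nonneg)
    then have "\<bar>s * r\<bar> \<le> \<bar>q\<bar>"
      using assms(2) by linarith
    then have "(s * ?b)\<^sup>2 \<le> (?m * q)\<^sup>2"
      using squares by (simp add: abs_le_square_iff)
    moreover have "?m * q \<le> 0" and "s * ?b \<le> 0"
      using 3 \<open>s * r \<le> 0\<close> assms(2) m0 b0 by (simp_all add: mult_nonneg_nonpos mult_nonpos_nonneg)
    ultimately show ?thesis
      using abs_le_square_iff[of "s * ?b" "?m * q"] by linarith
  qed
qed

lemma reduced_objective_mono:
  assumes "s\<^sup>2 \<le> 1" and "r \<ge> 0" and "\<alpha> \<le> p" and "p < s * r"
    and "\<alpha>\<^sup>2 \<le> r\<^sup>2" and "p\<^sup>2 \<le> r\<^sup>2"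
  shows "reduced_objective s r \<alpha> \<le> reduced_objective s r p"
proof -
  let ?m = "sqrt (1 - s\<^sup>2)" and ?b = "sqrt (r\<^sup>2 - \<alpha>\<^sup>2)" and ?g = "sqrt (r\<^sup>2 - p\<^sup>2)"
  have "?m * p \<le> s * ?g" and "?m * \<alpha> \<le> s * ?b"
    using cross_nonneg_below_peak assms by auto
  then have sign: "(p - \<alpha>) * (?m * (p + \<alpha>) - s * (?b + ?g)) \<le> 0"
    using assms(3) by (intro mult_nonneg_nonpos) (auto simp: algebra_simps)
  have diff: "(?b + ?g) * (?b - ?g) = (p - \<alpha>) * (p + \<alpha>)"
    using assms by (simp add: algebra_simps flip: power2_eq_square)
  have "(?b + ?g) * (s * (\<alpha> - p) + ?m * (?b - ?g)) = (?b + ?g) * s * (\<alpha> - p) + ?m * ((?b + ?g) * (?b - ?g))"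
    by (simp add: algebra_simps)
  also have "\<dots> = (p - \<alpha>) * (?m * (p + \<alpha>) - s * (?b + ?g))"
    unfolding diff by (simp add: algebra_simps)
  finally have product: "(?b + ?g) * (s * (\<alpha> - p) + ?m * (?b - ?g)) \<le> 0"
    using sign by simp
  show ?thesis
  proof (cases "?b + ?g > 0")
    case True
    then have "s * (\<alpha> - p) + ?m * (?b - ?g) \<le> 0"
      using product by (simp add: mult_le_0_iff)
    then show ?thesis
      by (simp add: reduced_objective_def algebra_simps)
  next
    case False
    then have "\<alpha>\<^sup>2 = r\<^sup>2" and "p\<^sup>2 = r\<^sup>2"
      using assms(5,6) by (smt (verit) real_sqrt_ge_zero real_sqrt_eq_zero_cancel_iff)+
    moreover have "s * r \<le> r"
      using assms(1,2) mult_right_mono[of s 1 r] by (simp add: abs_square_le_1 abs_le_iff)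
    ultimately have "\<alpha> = p"
      using assms(2-4) by (auto simp: power2_eq_iff)
    then show ?thesis
      by simp
  qed
qed

lemma reduced_objective_le_phi_formula:
  assumes "s\<^sup>2 \<le> 1" and "r \<ge> 0" and "\<alpha> \<le> - c" and "\<alpha>\<^sup>2 \<le> r\<^sup>2" and "c\<^sup>2 \<le> r\<^sup>2"
  shows "reduced_objective s r \<alpha> \<le> phi_formula s r c"
proof (cases "s * r + c \<le> 0")
  case True
  then show ?thesis
    using reduced_objective_le assms by (simp add: phi_formula_eq)
next
  case False
  then show ?thesis
    using reduced_objective_mono[of s r \<alpha> "- c"] assms by (simp add: phi_formula_eq)
qed

lemma inner_le_phi_formula:
  fixes lam a x :: "'a::real_inner"
  assumes lam: "norm lam = 1" and a: "norm a = 1" and x: "norm x \<le> r"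
    and feasible: "a \<bullet> x + c \<le> 0" and c: "\<bar>c\<bar> \<le> r"
  shows "lam \<bullet> x \<le> phi_formula (lam \<bullet> a) r c"
proof -
  define s where "s = lam \<bullet> a"
  define \<alpha> where "\<alpha> = a \<bullet> x"
  define \<mu> where "\<mu> = lam - s *\<^sub>R a"
  define z where "z = x - \<alpha> *\<^sub>R a"
  have aa: "a \<bullet> a = 1" and ll: "lam \<bullet> lam = 1"
    using lam a by (simp_all add: norm_eq_1)
  have s: "s\<^sup>2 \<le> 1"
    unfolding s_def using lam a by (simp add: inner_sq_le_1)
  have r: "r \<ge> 0"
    using c by linarith
  have "\<bar>\<alpha>\<bar> \<le> r"
    using Cauchy_Schwarz_ineq2[of a x] a x by (simp add: \<alpha>_def)
  then have \<alpha>r: "\<alpha>\<^sup>2 \<le> r\<^sup>2"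
    using r by (simp add: abs_le_square_iff[symmetric])
  have "(norm \<mu>)\<^sup>2 = 1 - s\<^sup>2"
    unfolding power2_norm_eq_inner \<mu>_def using aa ll
    by (simp add: inner_diff_left inner_diff_right s_def inner_commute power2_eq_square)
  then have norm_\<mu>: "norm \<mu> = sqrt (1 - s\<^sup>2)"
    by (simp add: real_sqrt_unique)
  have "(norm z)\<^sup>2 = (norm x)\<^sup>2 - \<alpha>\<^sup>2"
    unfolding power2_norm_eq_inner z_def using aa
    by (simp add: inner_diff_left inner_diff_right \<alpha>_def inner_commute power2_eq_square)
  also have "\<dots> \<le> r\<^sup>2 - \<alpha>\<^sup>2"
    using x by (simp add: power_mono)
  finally have norm_z: "norm z \<le> sqrt (r\<^sup>2 - \<alpha>\<^sup>2)"
    by (simp add: real_le_rsqrt)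
  have "lam \<bullet> x = s * \<alpha> + \<mu> \<bullet> z"
    unfolding \<mu>_def z_def using aa
    by (simp add: inner_diff_left inner_diff_right s_def \<alpha>_def inner_commute algebra_simps)
  also have "\<dots> \<le> s * \<alpha> + norm \<mu> * norm z"
    using norm_cauchy_schwarz by simp
  also have "\<dots> \<le> reduced_objective s r \<alpha>"
    unfolding reduced_objective_def norm_\<mu> using s by (intro add_left_mono mult_left_mono norm_z) simp
  also have "\<dots> \<le> phi_formula s r c"
    using reduced_objective_le_phi_formula[OF s r _ \<alpha>r] feasible c r
    by (simp add: \<alpha>_def abs_le_square_iff[symmetric])
  finally show ?thesis
    by (simp add: s_def)
qed

lemma phi_formula_attained:
  fixes lam a :: "'a::real_inner"
  assumes lam: "norm lam = 1" and a: "norm a = 1" and c: "\<bar>c\<bar> \<le> r"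
  obtains x where "norm x \<le> r" and "a \<bullet> x + c \<le> 0" and "lam \<bullet> x = phi_formula (lam \<bullet> a) r c"
proof -
  define s where "s = lam \<bullet> a"
  have aa: "a \<bullet> a = 1" and ll: "lam \<bullet> lam = 1"
    using lam a by (simp_all add: norm_eq_1)
  have s: "s\<^sup>2 \<le> 1"
    unfolding s_def using lam a by (simp add: inner_sq_le_1)
  have r: "r \<ge> 0"
    using c by linarith
  show ?thesis
  proof (cases "s * r + c \<le> 0")
    case True
    show ?thesis
      by (rule that[of "r *\<^sub>R lam"])
        (use True r lam ll in \<open>simp_all add: phi_formula_def s_def inner_commute mult.commute\<close>)
  next
    case False
    define \<mu> where "\<mu> = lam - s *\<^sub>R a"
    define m where "m = sqrt (1 - s\<^sup>2)"
    define g where "g = sqrt (r\<^sup>2 - c\<^sup>2)"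
    define x where "x = (- c) *\<^sub>R a + (g / m) *\<^sub>R \<mu>"
    have m: "m\<^sup>2 = 1 - s\<^sup>2"
      using s by (simp add: m_def)
    have g: "g\<^sup>2 = r\<^sup>2 - c\<^sup>2"
      using c r by (simp add: g_def abs_le_square_iff[symmetric])
    have a\<mu>: "a \<bullet> \<mu> = 0" and lam\<mu>: "lam \<bullet> \<mu> = m\<^sup>2" and \<mu>\<mu>: "\<mu> \<bullet> \<mu> = m\<^sup>2"
      unfolding \<mu>_def m using aa ll
      by (simp_all add: inner_diff_right inner_diff_left s_def inner_commute power2_eq_square)
    have "(norm x)\<^sup>2 = c\<^sup>2 + (g / m)\<^sup>2 * (\<mu> \<bullet> \<mu>)"
      unfolding x_def power2_norm_eq_inner
      by (simp only: inner_add_left inner_add_right inner_scaleR_left inner_scaleR_right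
          inner_commute[of \<mu> a] a\<mu> aa) (simp add: power2_eq_square)
    also have "\<dots> \<le> c\<^sup>2 + g\<^sup>2"
      unfolding \<mu>\<mu> by (cases "m = 0") (simp_all add: power_divide)
    finally have "norm x \<le> r"
      using g r by (auto intro: power2_le_imp_le)
    moreover have "a \<bullet> x + c = 0"
      unfolding x_def using aa a\<mu> by (simp add: inner_diff_right)
    moreover have "lam \<bullet> x = phi_formula s r c"
    proof -
      have "lam \<bullet> x = (g / m) * m\<^sup>2 - c * s"
        unfolding x_def by (simp add: inner_diff_right lam\<mu> s_def)
      also have "\<dots> = g * m - c * s"
        by (cases "m = 0") (simp_all add: power2_eq_square)
      finally show ?thesis
        using False by (simp add: phi_formula_def g_def m_def real_sqrt_mult)
    qed
    ultimately show ?thesis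
      by (intro that) (simp_all add: s_def)
  qed
qed

lemma phi_eq_phi_formula:
  fixes lam a :: "real ^ 'n" and d :: "real ^ 'm"
  assumes lam: "norm lam = 1" and a: "norm a = 1" and d: "norm d \<le> 1"
  shows "phi lam a d y = phi_formula (lam \<bullet> a) (norm y) (d \<bullet> y)"
proof -
  have c: "\<bar>d \<bullet> y\<bar> \<le> norm y"
    using d by (rule abs_inner_le_norm)
  obtain x where "norm x \<le> norm y" "a \<bullet> x + d \<bullet> y \<le> 0" "lam \<bullet> x = phi_formula (lam \<bullet> a) (norm y) (d \<bullet> y)"
    using phi_formula_attained[OF lam a c] .
  then show ?thesis
    unfolding phi_def using inner_le_phi_formula[OF lam a _ _ c]
    by (intro cSup_eq_maximum) (auto intro!: image_eqI[of _ _ x])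
qed

lemma phi_formula_homogeneous:
  assumes "t > 0"
  shows "phi_formula s (t * r) (t * c) = t * phi_formula s r c"
proof -
  have "s * (t * r) + t * c = t * (s * r + c)"
    by (simp add: algebra_simps)
  then have "s * (t * r) + t * c \<le> 0 \<longleftrightarrow> s * r + c \<le> 0"
    using assms by (simp add: mult_le_0_iff)
  moreover have "sqrt (((t * r)\<^sup>2 - (t * c)\<^sup>2) * (1 - s\<^sup>2)) = t * sqrt ((r\<^sup>2 - c\<^sup>2) * (1 - s\<^sup>2))"
    using assms by (simp add: power_mult_distrib real_sqrt_mult flip: right_diff_distrib)
  ultimately show ?thesis
    by (simp add: phi_formula_def algebra_simps)
qed

lemma phi_formula_swap:
  assumes "r > 0"
  shows "r * phi_formula (c / r) 1 s = phi_formula s r c"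
proof -
  have "c / r * 1 + s \<le> 0 \<longleftrightarrow> s * r + c \<le> 0"
    using assms by (simp add: divide_le_0_iff add_divide_eq_iff algebra_simps)
  moreover have "r * sqrt ((1 - s\<^sup>2) * (1 - (c / r)\<^sup>2)) = sqrt ((r\<^sup>2 - c\<^sup>2) * (1 - s\<^sup>2))"
  proof -
    have "r\<^sup>2 * ((1 - s\<^sup>2) * (1 - (c / r)\<^sup>2)) = (r\<^sup>2 - c\<^sup>2) * (1 - s\<^sup>2)"
      using assms by (simp add: field_simps)
    then show ?thesis
      using assms by (metis abs_of_pos real_sqrt_abs real_sqrt_mult)
  qed
  ultimately show ?thesis
    using assms by (simp add: phi_formula_def right_diff_distrib)
qed

definition phi_closed :: "real \<Rightarrow> 'a::real_inner \<Rightarrow> 'a \<Rightarrow> real" where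
  "phi_closed s d y = phi_formula s (norm y) (d \<bullet> y)"

lemma phi_closed_zero [simp]: "phi_closed s d 0 = 0"
  by (simp add: phi_closed_def phi_formula_def)

text \<open>By \<open>phi_formula_swap\<close>, \<open>phi_closed s d y\<close> is \<open>\<parallel>y\<parallel>\<close> times the optimal value of the
  problem with the unit vectors \<open>(y / \<parallel>y\<parallel>, 0)\<close> and \<open>(d, \<surd>(1 - \<parallel>d\<parallel>\<^sup>2))\<close> in place of \<open>\<lambda>\<close>
  and \<open>a\<close>, and \<open>s\<close> in place of \<open>d\<^sup>T y\<close>; the first component of a maximizer is the
  supporting functional.\<close>
lemma phi_closed_supporting_functional_nonzero:
  fixes d y :: "'a::real_inner"
  assumes d: "norm d \<le> 1" and s: "s\<^sup>2 \<le> 1" and y: "y \<noteq> 0"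
  obtains u where "u \<bullet> y = phi_closed s d y" and "\<And>z. u \<bullet> z \<le> phi_closed s d z"
proof -
  define e where "e = (d, sqrt (1 - (norm d)\<^sup>2))"
  define unit where "unit = (\<lambda>z::'a. (z /\<^sub>R norm z, 0::real))"
  have "(norm d)\<^sup>2 \<le> 1"
    using d by (simp add: abs_square_le_1)
  then have e_unit: "norm e = 1"
    by (simp add: e_def norm_Pair)
  have unit_unit: "norm (unit z) = 1" if "z \<noteq> 0" for z
    using that by (simp add: unit_def norm_Pair)
  have unit_e: "unit z \<bullet> e = (d \<bullet> z) / norm z" for z
    by (simp add: unit_def e_def inner_Pair inner_commute divide_inverse mult.commute)
  have fst_inner: "fst w \<bullet> z = norm z * (unit z \<bullet> w)" if "z \<noteq> 0" for z w
    using that by (cases w) (simp add: unit_def inner_Pair inner_commute)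
  have s_le: "\<bar>s\<bar> \<le> 1"
    using s by (simp add: abs_square_le_1)
  obtain w where w: "norm w \<le> 1" "e \<bullet> w + s \<le> 0" and wy: "unit y \<bullet> w = phi_formula (unit y \<bullet> e) 1 s"
    using phi_formula_attained[OF unit_unit[OF y] e_unit s_le] .
  show ?thesis
  proof (rule that[of "fst w"])
    show "fst w \<bullet> y = phi_closed s d y"
      using y by (simp add: fst_inner wy unit_e phi_formula_swap phi_closed_def)
  next
    fix z :: 'a
    show "fst w \<bullet> z \<le> phi_closed s d z"
    proof (cases "z = 0")
      case False
      have "unit z \<bullet> w \<le> phi_formula (unit z \<bullet> e) 1 s"
        using inner_le_phi_formula[OF unit_unit[OF False] e_unit w s_le] .
      then have "norm z * (unit z \<bullet> w) \<le> norm z * phi_formula (unit z \<bullet> e) 1 s"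
        by (simp add: mult_left_mono)
      then show ?thesis
        using False by (simp add: fst_inner unit_e phi_formula_swap phi_closed_def)
    qed simp
  qed
qed

lemma phi_closed_supporting_functional:
  fixes d y :: "'a::real_inner"
  assumes "norm d \<le> 1" and "s\<^sup>2 \<le> 1"
  shows "\<exists>u. u \<bullet> y = phi_closed s d y \<and> (\<forall>z. u \<bullet> z \<le> phi_closed s d z)"
proof (cases "\<exists>v::'a. v \<noteq> 0")
  case True
  then obtain v :: 'a where "v \<noteq> 0"
    by blast
  then obtain u where u: "u \<bullet> v = phi_closed s d v" "\<And>z. u \<bullet> z \<le> phi_closed s d z"
    using phi_closed_supporting_functional_nonzero[OF assms] by blast
  show ?thesis
  proof (cases "y = 0")
    case False
    then show ?thesis
      using phi_closed_supporting_functional_nonzero[OF assms] by metis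
  qed (use u in auto)
next
  case False
  then have "y = 0" and "\<And>z::'a. z = 0"
    by blast+
  then show ?thesis
    by (metis inner_zero_left order_refl phi_closed_zero)
qed

definition phi_branch :: "real \<Rightarrow> 'a::real_inner \<Rightarrow> 'a \<Rightarrow> real" where
  "phi_branch s d y = sqrt (((norm y)\<^sup>2 - (d \<bullet> y)\<^sup>2) * (1 - s\<^sup>2)) - (d \<bullet> y) * s"

lemma phi_closed_eq_branch:
  "phi_closed s d y = (if s * norm y + d \<bullet> y \<le> 0 then norm y else phi_branch s d y)"
  by (simp add: phi_closed_def phi_formula_def phi_branch_def)

lemma phi_branch_le_norm:
  fixes d y :: "'a::real_inner"
  assumes "norm d \<le> 1" and "s\<^sup>2 \<le> 1"
  shows "phi_branch s d y \<le> norm y"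
proof -
  have "(d \<bullet> y)\<^sup>2 \<le> (norm y)\<^sup>2"
    using abs_inner_le_norm[OF assms(1)] by (simp add: abs_le_square_iff[symmetric])
  then have "reduced_objective s (norm y) (- (d \<bullet> y)) \<le> norm y"
    using assms(2) by (simp add: reduced_objective_le)
  then show ?thesis
    by (simp add: phi_branch_def reduced_objective_def real_sqrt_mult mult.commute)
qed

lemma phi_branch_differentiable:
  fixes d y :: "'a::real_inner"
  assumes "s\<^sup>2 \<le> 1" and "(d \<bullet> y)\<^sup>2 < (norm y)\<^sup>2 \<or> s\<^sup>2 = 1 \<or> (\<forall>z. (d \<bullet> z)\<^sup>2 = (norm z)\<^sup>2)"
  shows "phi_branch s d differentiable at y"
proof (cases "s\<^sup>2 = 1 \<or> (\<forall>z. (d \<bullet> z)\<^sup>2 = (norm z)\<^sup>2)")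
  case True
  then have "phi_branch s d = (\<lambda>z. - (d \<bullet> z) * s)"
    by (auto simp: phi_branch_def fun_eq_iff)
  then show ?thesis
    by (simp add: bounded_linear_imp_differentiable bounded_linear_inner_right bounded_linear_mult_left
        bounded_linear_minus)
next
  case False
  then have "s\<^sup>2 < 1" and "(d \<bullet> y)\<^sup>2 < (norm y)\<^sup>2"
    using assms by auto
  then have "((norm y)\<^sup>2 - (d \<bullet> y)\<^sup>2) * (1 - s\<^sup>2) > 0"
    by simp
  then show ?thesis
    unfolding phi_branch_def[abs_def] power2_norm_eq_inner
    by (intro differentiableI) (rule derivative_intros | assumption)+
qed

lemma phi_branch_eq_norm:
  assumes "s\<^sup>2 \<le> 1" and "s * norm y + d \<bullet> y = 0"
  shows "phi_branch s d y = norm y"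
proof -
  have dy: "d \<bullet> y = - s * norm y"
    using assms(2) by simp
  have "((norm y)\<^sup>2 - (d \<bullet> y)\<^sup>2) * (1 - s\<^sup>2) = (norm y * (1 - s\<^sup>2))\<^sup>2"
    by (simp add: dy power2_eq_square algebra_simps)
  then have "phi_branch s d y = norm y * (1 - s\<^sup>2) - (d \<bullet> y) * s"
    using assms(1) by (simp add: phi_branch_def)
  also have "\<dots> = norm y"
    by (simp add: dy algebra_simps power2_eq_square)
  finally show ?thesis .
qed

lemma phi_branch_differentiable_active:
  fixes d y :: "'a::real_inner"
  assumes d: "norm d \<le> 1" and s: "s\<^sup>2 \<le> 1" and active: "s * norm y + d \<bullet> y \<ge> 0"
    and off_ray: "y \<noteq> norm y *\<^sub>R d \<or> (\<forall>z. (d \<bullet> z)\<^sup>2 = (norm z)\<^sup>2)"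
  shows "phi_branch s d differentiable at y"
proof (rule phi_branch_differentiable[OF s])
  consider "\<bar>d \<bullet> y\<bar> < norm y" | "d \<bullet> y = norm y" | "d \<bullet> y = - norm y" "y \<noteq> 0"
    using abs_inner_le_norm[OF d, of y] by (cases "y = 0") (auto simp: abs_if le_less split: if_splits)
  then show "(d \<bullet> y)\<^sup>2 < (norm y)\<^sup>2 \<or> s\<^sup>2 = 1 \<or> (\<forall>z. (d \<bullet> z)\<^sup>2 = (norm z)\<^sup>2)"
  proof cases
    case 1
    then show ?thesis
      using abs_le_square_iff[of "norm y" "d \<bullet> y"] by auto
  next
    case 2
    then show ?thesis
      using inner_eq_norm_imp_eq_scaleR[OF d] off_ray by auto
  next
    case 3
    then have "s \<ge> 1"
      using active by simp
    moreover have "s \<le> 1"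
      using s by (simp add: abs_square_le_1 abs_le_iff)
    ultimately show ?thesis
      by simp
  qed
qed

lemma phi_closed_differentiable:
  fixes d y :: "'a::real_inner"
  assumes d: "norm d \<le> 1" and s: "s\<^sup>2 \<le> 1" and y: "y \<noteq> 0"
    and off_ray: "y \<noteq> norm y *\<^sub>R d \<or> (\<forall>z. (d \<bullet> z)\<^sup>2 = (norm z)\<^sup>2)"
  shows "phi_closed s d differentiable at y"
proof -
  define g where "g z = s * norm z + d \<bullet> z" for z
  have g: "(g \<longlongrightarrow> g y) (at y)"
    unfolding g_def by (intro tendsto_intros)
  have norm_diff: "norm differentiable at y"
    using y by simp
  have branch_diff: "g y \<ge> 0 \<Longrightarrow> phi_branch s d differentiable at y"
    using phi_branch_differentiable_active[OF d s _ off_ray] by (simp add: g_def)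
  consider "g y < 0" | "g y > 0" | "g y = 0"
    by linarith
  then show ?thesis
  proof cases
    case 1
    then have "eventually (\<lambda>z. g z < 0) (at y)"
      using g by (simp add: order_tendstoD(2))
    then have "eventually (\<lambda>z. norm z \<le> phi_closed s d z \<and> phi_closed s d z \<le> norm z) (at y)"
      by eventually_elim (simp add: phi_closed_eq_branch g_def)
    then show ?thesis
      by (rule differentiable_squeeze) (use 1 norm_diff in \<open>simp_all add: phi_closed_eq_branch g_def\<close>)
  next
    case 2
    then have "eventually (\<lambda>z. g z > 0) (at y)"
      using g by (simp add: order_tendstoD(1))
    then have "eventually (\<lambda>z. phi_branch s d z \<le> phi_closed s d z \<and> phi_closed s d z \<le> phi_branch s d z) (at y)"
      by eventually_elim (simp add: phi_closed_eq_branch g_def)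
    then show ?thesis
      by (rule differentiable_squeeze) (use 2 branch_diff in \<open>simp_all add: phi_closed_eq_branch g_def\<close>)
  next
    case 3
    have "eventually (\<lambda>z. phi_branch s d z \<le> phi_closed s d z \<and> phi_closed s d z \<le> norm z) (at y)"
      using phi_branch_le_norm[OF d s] by (simp add: always_eventually phi_closed_eq_branch)
    then show ?thesis
      by (rule differentiable_squeeze)
        (use 3 s norm_diff branch_diff in \<open>simp_all add: phi_closed_eq_branch g_def phi_branch_eq_norm\<close>)
  qed
qed

lemma phi_closed_differentiable_off_ray:
  fixes d y :: "'a::real_inner"
  assumes "norm d \<le> 1" and "s\<^sup>2 \<le> 1" and "y \<notin> {t *\<^sub>R d | t. t \<ge> 0}"
  shows "phi_closed s d differentiable at y"
proof (rule phi_closed_differentiable[OF assms(1,2)])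
  show "y \<noteq> 0"
    using assms(3) by (metis (mono_tags, lifting) mem_Collect_eq order_refl scaleR_zero_left)
  show "y \<noteq> norm y *\<^sub>R d \<or> (\<forall>z. (d \<bullet> z)\<^sup>2 = (norm z)\<^sup>2)"
    using assms(3) by auto
qed

lemma phi_closed_differentiable_norm_less_1:
  fixes d y :: "'a::real_inner"
  assumes "norm d < 1" and "s\<^sup>2 \<le> 1" and "y \<noteq> 0"
  shows "phi_closed s d differentiable at y"
proof (rule phi_closed_differentiable[OF _ assms(2,3)])
  have "norm (norm y *\<^sub>R d) < norm y"
    using assms(1,3) by simp
  then have "y \<noteq> norm y *\<^sub>R d"
    by (metis less_irrefl)
  then show "y \<noteq> norm y *\<^sub>R d \<or> (\<forall>z. (d \<bullet> z)\<^sup>2 = (norm z)\<^sup>2)"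
    by blast
qed (use assms(1) in simp)

lemma inner_sq_eq_norm_sq_if_card_le_1:
  fixes d y :: "real ^ 'm"
  assumes "CARD('m) \<le> 1" and "norm d = 1"
  shows "(d \<bullet> y)\<^sup>2 = (norm y)\<^sup>2"
proof -
  have "CARD('m) > 0"
    by simp
  then have "CARD('m) = 1"
    using assms(1) by linarith
  then obtain i :: 'm where i: "(UNIV :: 'm set) = {i}"
    by (metis card_1_singletonE)
  have "d \<bullet> d = 1"
    using assms(2) by (simp add: norm_eq_1)
  then have "(d \<bullet> y)\<^sup>2 = y \<bullet> y"
    by (simp add: inner_vec_def i power2_eq_square algebra_simps)
  then show ?thesis
    by (simp add: power2_norm_eq_inner)
qed

lemma phi_closed_homogeneous:
  assumes "t > 0"
  shows "phi_closed s d (t *\<^sub>R y) = t * phi_closed s d y"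
  using assms by (simp add: phi_closed_def phi_formula_homogeneous)

theorem proposition5:
  fixes lam a :: "real ^ 'n" and d :: "real ^ 'm"
  assumes "norm lam = 1" and "norm a = 1" and "norm d \<le> 1"
  shows "(\<forall>y. phi lam a d y =
            (if (lam \<bullet> a) * norm y + d \<bullet> y \<le> 0 then norm y
             else sqrt ((norm y ^ 2 - (d \<bullet> y) ^ 2) * (1 - (lam \<bullet> a) ^ 2)) - (d \<bullet> y) * (lam \<bullet> a)))
       \<and> convex_on UNIV (phi lam a d)
       \<and> (\<forall>t y. t > 0 \<longrightarrow> phi lam a d (t *\<^sub>R y) = t * phi lam a d y)
       \<and> (if norm d = 1 \<and> CARD('m) > 1
          then (\<forall>y. y \<notin> {t *\<^sub>R d | t. t \<ge> 0} \<longrightarrow> phi lam a d differentiable (at y))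
          else (\<forall>y. y \<noteq> 0 \<longrightarrow> phi lam a d differentiable (at y)))"
proof -
  define s where "s = lam \<bullet> a"
  have s: "s\<^sup>2 \<le> 1"
    using assms by (simp add: s_def inner_sq_le_1)
  have phi: "phi lam a d = phi_closed s d"
    using phi_eq_phi_formula[OF assms] by (simp add: fun_eq_iff phi_closed_def s_def)
  have formula: "phi_closed s d y =
      (if (lam \<bullet> a) * norm y + d \<bullet> y \<le> 0 then norm y
       else sqrt ((norm y ^ 2 - (d \<bullet> y) ^ 2) * (1 - (lam \<bullet> a) ^ 2)) - (d \<bullet> y) * (lam \<bullet> a))" for y
    by (simp add: phi_closed_def phi_formula_def s_def)
  have convex: "convex_on UNIV (phi_closed s d)"
    by (rule convex_on_if_supported) (rule phi_closed_supporting_functional[OF assms(3) s])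
  have differentiable: "if norm d = 1 \<and> CARD('m) > 1
      then (\<forall>y. y \<notin> {t *\<^sub>R d | t. t \<ge> 0} \<longrightarrow> phi_closed s d differentiable (at y))
      else (\<forall>y. y \<noteq> 0 \<longrightarrow> phi_closed s d differentiable (at y))"
  proof (cases "norm d = 1")
    case True
    then have "CARD('m) \<le> 1 \<Longrightarrow> \<forall>z. (d \<bullet> z)\<^sup>2 = (norm z)\<^sup>2"
      using inner_sq_eq_norm_sq_if_card_le_1 by blast
    then show ?thesis
      using True phi_closed_differentiable[OF assms(3) s] phi_closed_differentiable_off_ray[OF assms(3) s]
      by (auto simp: not_less)
  next
    case False
    then have "norm d < 1"
      using assms(3) by simp
    with False show ?thesis
      using phi_closed_differentiable_norm_less_1[OF _ s] by auto
  qed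
  show ?thesis
    unfolding phi using formula convex phi_closed_homogeneous differentiable by blast
qed

end
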